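(* Let $A,B,C$ be real random variables on a common probability space with finite second moments, $\mathrm{Var}(B)>0$, $\mathbb{E}[A]\neq0$, $\mathbb{E}[C]\neq 0$, and set $R=\mathbb{E}[A]/\mathbb{E}[C]$. Let $n\ge1$ and let $(A_i,B_i,C_i)_{i=1,\dots,n}$ be i.i.d. copies of $(A,B,C)$. For $\alpha\in\mathbb{R}$ put $N_\alpha=\overline{A_n}+\alpha(\mathbb{E}[B]-\overline{B_n})$, and let $\alpha_o'=\frac{\mathrm{Cov}(A,B)-R\,\mathrm{Cov}(B,C)}{\mathrm{Var}(B)}$. Then $$\Phi(N_{\alpha_o'},\overline{C_n})-\Phi(\overline{A_n},\overline{C_n})=-\frac{1}{n\,\mathbb{E}[C]^2}\,\frac{\big(\mathrm{Cov}(A,B)-R\,\mathrm{Cov}(B,C)\big)^2}{\mathrm{Var}(B)}\le 0 .$$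
   Context: For a random variable $X$, $\overline{X_n}=\frac1n\sum_{i=1}^n X_i$ denotes the sample mean of the i.i.d. copies $X_1,\dots,X_n$. For real random variables $X,Z$ with finite second moments and $\mathbb{E}[Z]\neq0$, define the first-order (delta-method) approximation of the variance of the ratio $X/Z$: $$\Phi(X,Z)=\frac{\mathrm{Var}(X)}{\mathbb{E}[Z]^2}+\frac{\mathbb{E}[X]^2}{\mathbb{E}[Z]^4}\mathrm{Var}(Z)-2\frac{\mathbb{E}[X]}{\mathbb{E}[Z]^3}\mathrm{Cov}(X,Z).$$ $\Phi(N_\alpha,\overline{C_n})$ is the paper's variance of the CV/MC estimator $N_\alpha/\overline{C_n}$ of $R$, and $\Phi(\overline{A_n},\overline{C_n})$ that of the Monte Carlo ratio estimator $\overline{A_n}/\overline{C_n}$; $\mathbb{E}[B]$ is a known constant. *)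

theory Defs
  imports "HOL-Probability.Probability"
begin

definition cov :: "'a measure \<Rightarrow> ('a \<Rightarrow> real) \<Rightarrow> ('a \<Rightarrow> real) \<Rightarrow> real" where
  "cov M X Z = integral\<^sup>L M (\<lambda>x. (X x - integral\<^sup>L M X) * (Z x - integral\<^sup>L M Z))"

definition sample_mean :: "nat \<Rightarrow> (nat \<Rightarrow> 'a \<Rightarrow> real) \<Rightarrow> 'a \<Rightarrow> real" where
  "sample_mean n X = (\<lambda>x. (\<Sum>i<n. X i x) / real n)"

text \<open>First-order (delta-method) approximation of the variance of X/Z.\<close>
definition Phi :: "'a measure \<Rightarrow> ('a \<Rightarrow> real) \<Rightarrow> ('a \<Rightarrow> real) \<Rightarrow> real" where
  "Phi M X Z =
     prob_space.variance M X / (prob_space.expectation M Z)^2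
   + (prob_space.expectation M X)^2 / (prob_space.expectation M Z)^4 * prob_space.variance M Z
   - 2 * prob_space.expectation M X / (prob_space.expectation M Z)^3 * cov M X Z"

end

theory Submission
  imports Defs
begin

text \<open>
  The delta-method variance is a variance in disguise: with r = E[X]/E[Z],
  Phi(X, Z) = Var(X - r Z) / E[Z]^2.  The control variate N = X + a (E[Y] - Y) has the mean of X,
  so r does not change and Phi(N, Z) - Phi(X, Z) = a (a Var Y - 2 Cov(X - r Z, Y)) / E[Z]^2,
  a quadratic in a that is minimised at a = Cov(X - r Z, Y) / Var Y.  For sample means of n i.i.d.
  copies the means are those of A, B, C and every covariance is divided by n (the cross terms vanish
  by independence), so this minimiser is exactly alpha'_o and the minimum is
  -(Cov(A, B) - R Cov(B, C))^2 / (n E[C]^2 Var B).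
\<close>

definition square_integrable :: "'a measure \<Rightarrow> ('a \<Rightarrow> real) \<Rightarrow> bool" where
  "square_integrable M X \<longleftrightarrow> X \<in> borel_measurable M \<and> integrable M (\<lambda>x. (X x)\<^sup>2)"

context prob_space
begin

lemma square_integrable_integrable: "square_integrable M X \<Longrightarrow> integrable M X"
  unfolding square_integrable_def by (auto intro: square_integrable_imp_integrable)

lemma integrable_mult_square_integrable:
  assumes "square_integrable M X" "square_integrable M Y"
  shows "integrable M (\<lambda>x. X x * Y x)"
proof (rule Bochner_Integration.integrable_bound)
  show "integrable M (\<lambda>x. (X x)\<^sup>2 + (Y x)\<^sup>2)"
    using assms unfolding square_integrable_def by auto
  show "(\<lambda>x. X x * Y x) \<in> borel_measurable M"
    using assms unfolding square_integrable_def by auto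
  have "\<bar>X x\<bar> * \<bar>Y x\<bar> \<le> (X x)\<^sup>2 + (Y x)\<^sup>2" for x
  proof -
    have "2 * (\<bar>X x\<bar> * \<bar>Y x\<bar>) \<le> (X x)\<^sup>2 + (Y x)\<^sup>2"
      using sum_squares_bound[of "\<bar>X x\<bar>" "\<bar>Y x\<bar>"] by (simp add: mult.assoc)
    moreover have "0 \<le> \<bar>X x\<bar> * \<bar>Y x\<bar>"
      by simp
    ultimately show ?thesis
      by linarith
  qed
  then show "AE x in M. norm (X x * Y x) \<le> norm ((X x)\<^sup>2 + (Y x)\<^sup>2)"
    by (simp add: abs_mult)
qed

lemma square_integrable_add_cmult:
  assumes "square_integrable M X" "square_integrable M Y"
  shows "square_integrable M (\<lambda>x. X x + a * Y x + k)"
proof -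
  have "(\<lambda>x. (X x + a * Y x + k)\<^sup>2) = (\<lambda>x. (X x)\<^sup>2 + a\<^sup>2 * (Y x)\<^sup>2 + k\<^sup>2
          + 2 * a * (X x * Y x) + 2 * k * X x + 2 * a * k * Y x)"
    by (simp add: power2_eq_square algebra_simps)
  then show ?thesis
    using assms integrable_mult_square_integrable[OF assms] square_integrable_integrable[OF assms(1)]
      square_integrable_integrable[OF assms(2)]
    unfolding square_integrable_def by auto
qed

lemma square_integrable_sum:
  "finite I \<Longrightarrow> (\<And>i. i \<in> I \<Longrightarrow> square_integrable M (X i))
    \<Longrightarrow> square_integrable M (\<lambda>x. \<Sum>i\<in>I. X i x)"
proof (induction I rule: finite_induct)
  case empty
  then show ?case unfolding square_integrable_def by simp
next
  case (insert i I)
  then show ?case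
    using square_integrable_add_cmult[of "X i" "\<lambda>x. \<Sum>i\<in>I. X i x" 1 0] by simp
qed

lemma square_integrable_sample_mean:
  "(\<And>i. i < n \<Longrightarrow> square_integrable M (X i)) \<Longrightarrow> square_integrable M (sample_mean n X)"
  using square_integrable_add_cmult[of "\<lambda>x. 0" "\<lambda>x. \<Sum>i<n. X i x" "1 / real n" 0]
    square_integrable_sum[of "{..<n}" X]
  unfolding sample_mean_def square_integrable_def by simp

lemma cov_commute: "cov M X Z = cov M Z X"
  unfolding cov_def by (simp add: mult.commute)

lemma variance_eq_cov: "variance X = cov M X X"
  unfolding cov_def by (simp add: power2_eq_square)

lemma cov_eq_expectation_mult:
  assumes "square_integrable M X" "square_integrable M Z"
  shows "cov M X Z = expectation (\<lambda>x. X x * Z x) - expectation X * expectation Z"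
proof -
  let ?a = "expectation X" and ?c = "expectation Z"
  have "(\<lambda>x. (X x - ?a) * (Z x - ?c)) = (\<lambda>x. X x * Z x - ?c * X x - ?a * Z x + ?a * ?c)"
    by (simp add: algebra_simps)
  then show ?thesis
    using assms square_integrable_integrable integrable_mult_square_integrable prob_space
    unfolding cov_def by simp
qed

lemma cov_add_cmult_left:
  assumes X: "square_integrable M X" and Y: "square_integrable M Y" and Z: "square_integrable M Z"
  shows "cov M (\<lambda>x. X x + a * Y x + k) Z = cov M X Z + a * cov M Y Z"
proof -
  have "(\<lambda>x. (X x + a * Y x + k) * Z x) = (\<lambda>x. X x * Z x + a * (Y x * Z x) + k * Z x)"
    by (simp add: algebra_simps)
  then show ?thesis
    using assms square_integrable_integrable integrable_mult_square_integrable prob_space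
    unfolding cov_eq_expectation_mult[OF square_integrable_add_cmult[OF X Y] Z]
      cov_eq_expectation_mult[OF X Z] cov_eq_expectation_mult[OF Y Z]
    by (simp add: algebra_simps)
qed

lemma variance_add_cmult:
  assumes X: "square_integrable M X" and Y: "square_integrable M Y"
  shows "variance (\<lambda>x. X x + a * Y x + k) = variance X + 2 * a * cov M X Y + a\<^sup>2 * variance Y"
proof -
  let ?W = "\<lambda>x. X x + a * Y x + k"
  have W: "square_integrable M ?W"
    using square_integrable_add_cmult[OF X Y] .
  have "variance ?W = cov M X ?W + a * cov M Y ?W"
    unfolding variance_eq_cov cov_add_cmult_left[OF X Y W] ..
  also have "\<dots> = variance X + 2 * a * cov M X Y + a\<^sup>2 * variance Y"
    unfolding cov_commute[of _ ?W] cov_add_cmult_left[OF X Y X] cov_add_cmult_left[OF X Y Y]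
      variance_eq_cov cov_commute[of Y X]
    by (simp add: power2_eq_square algebra_simps)
  finally show ?thesis .
qed

lemma Phi_eq_variance_residual:
  assumes X: "square_integrable M X" and Z: "square_integrable M Z"
  shows "Phi M X Z = variance (\<lambda>x. X x - expectation X / expectation Z * Z x) / (expectation Z)\<^sup>2"
proof -
  have residual: "variance (\<lambda>x. X x - expectation X / expectation Z * Z x)
      = variance X - 2 * (expectation X / expectation Z) * cov M X Z
        + (expectation X / expectation Z)\<^sup>2 * variance Z"
    using variance_add_cmult[OF X Z, of "- expectation X / expectation Z" 0] by simp
  have "v / e\<^sup>2 + m\<^sup>2 / e ^ 4 * w - 2 * m / e ^ 3 * c = (v - 2 * (m / e) * c + (m / e)\<^sup>2 * w) / e\<^sup>2"
    for v w c m e :: real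
    \<comment> \<open>no hypothesis on E[Z] is needed: for e = 0 both sides vanish because x / 0 = 0\<close>
    by (cases "e = 0") (simp_all add: field_simps power2_eq_square power3_eq_cube power4_eq_xxxx)
  then show ?thesis
    unfolding Phi_def residual .
qed

lemma Phi_control_variate:
  assumes X: "square_integrable M X" and Y: "square_integrable M Y" and Z: "square_integrable M Z"
  shows "Phi M (\<lambda>x. X x + a * (expectation Y - Y x)) Z - Phi M X Z
    = a * (a * variance Y - 2 * cov M (\<lambda>x. X x - expectation X / expectation Z * Z x) Y)
        / (expectation Z)\<^sup>2"
proof -
  define U where "U = (\<lambda>x. X x - expectation X / expectation Z * Z x)"
  define N where "N = (\<lambda>x. X x + (- a) * Y x + a * expectation Y)"
  have U: "square_integrable M U"
    using square_integrable_add_cmult[OF X Z, of "- expectation X / expectation Z" 0]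
    unfolding U_def by simp
  have N: "square_integrable M N"
    unfolding N_def using X Y by (rule square_integrable_add_cmult)
  have "expectation N = expectation X"
    unfolding N_def using X Y square_integrable_integrable prob_space by simp
  then have residual: "(\<lambda>x. N x - expectation N / expectation Z * Z x)
      = (\<lambda>x. U x + (- a) * Y x + a * expectation Y)"
    unfolding N_def U_def by (simp add: algebra_simps)
  have "Phi M N Z = variance (\<lambda>x. U x + (- a) * Y x + a * expectation Y) / (expectation Z)\<^sup>2"
    \<comment> \<open>variance is an abbreviation: fold it into cov first, or residual cannot match inside it\<close>
    using Phi_eq_variance_residual[OF N Z] unfolding variance_eq_cov unfolding residual .
  also have "\<dots> = (variance U - 2 * a * cov M U Y + a\<^sup>2 * variance Y) / (expectation Z)\<^sup>2"
    unfolding variance_add_cmult[OF U Y] by simp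
  finally have PhiN: "Phi M N Z = (variance U - 2 * a * cov M U Y + a\<^sup>2 * variance Y) / (expectation Z)\<^sup>2"
    by simp
  have PhiX: "Phi M X Z = variance U / (expectation Z)\<^sup>2"
    unfolding Phi_eq_variance_residual[OF X Z] U_def ..
  have N_eq: "(\<lambda>x. X x + a * (expectation Y - Y x)) = N"
    unfolding N_def by (simp add: algebra_simps)
  have "(u - 2 * a * c + a\<^sup>2 * w) / e\<^sup>2 - u / e\<^sup>2 = a * (a * w - 2 * c) / e\<^sup>2" for u w c e :: real
    by (simp add: diff_divide_distrib[symmetric] power2_eq_square algebra_simps)
  then show ?thesis
    unfolding N_eq U_def[symmetric] PhiN PhiX .
qed

lemma cov_sum_left:
  "finite I \<Longrightarrow> (\<And>i. i \<in> I \<Longrightarrow> square_integrable M (X i)) \<Longrightarrow> square_integrable M Z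
    \<Longrightarrow> cov M (\<lambda>x. \<Sum>i\<in>I. X i x) Z = (\<Sum>i\<in>I. cov M (X i) Z)"
proof (induction I rule: finite_induct)
  case empty
  then show ?case unfolding cov_def by simp
next
  case (insert i I)
  then show ?case
    using cov_add_cmult_left[of "X i" "\<lambda>x. \<Sum>i\<in>I. X i x" Z 1 0] square_integrable_sum[of I X]
    by simp
qed

lemma cov_divide_left: "cov M (\<lambda>x. X x / c) Z = cov M X Z / c"
  unfolding cov_def by (simp add: diff_divide_distrib[symmetric])

lemma cov_sample_mean:
  assumes X: "\<And>i. i < n \<Longrightarrow> square_integrable M (X i)"
    and Y: "\<And>i. i < n \<Longrightarrow> square_integrable M (Y i)"
    and uncorrelated: "\<And>i j. i < n \<Longrightarrow> j < n \<Longrightarrow> i \<noteq> j \<Longrightarrow> cov M (X i) (Y j) = 0"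
    and diagonal: "\<And>i. i < n \<Longrightarrow> cov M (X i) (Y i) = c"
  shows "cov M (sample_mean n X) (sample_mean n Y) = c / real n"
proof -
  have row: "cov M (X i) (sample_mean n Y) = (\<Sum>j<n. cov M (X i) (Y j)) / real n" if "i < n" for i
    using cov_sum_left[of "{..<n}" Y "X i"] X[OF that] Y
    unfolding cov_commute[of "X i"] sample_mean_def cov_divide_left by simp
  have "cov M (sample_mean n X) (sample_mean n Y) = (\<Sum>i<n. cov M (X i) (sample_mean n Y)) / real n"
    using cov_sum_left[of "{..<n}" X "sample_mean n Y"] X square_integrable_sample_mean[OF Y]
    unfolding sample_mean_def[of n X] cov_divide_left by simp
  also have "\<dots> = (\<Sum>i<n. \<Sum>j<n. cov M (X i) (Y j)) / (real n)\<^sup>2"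
    using row by (simp add: sum_divide_distrib power2_eq_square)
  also have "\<dots> = (\<Sum>i<n. c) / (real n)\<^sup>2"
  proof -
    have "(\<Sum>j<n. cov M (X i) (Y j)) = c" if "i < n" for i
      using that uncorrelated diagonal by (simp add: sum.remove[of "{..<n}" i])
    then show ?thesis by simp
  qed
  also have "\<dots> = c / real n"
    by (cases "n = 0") (simp_all add: power2_eq_square)
  finally show ?thesis .
qed

lemma expectation_distr_eq:
  fixes T T0 :: "'a \<Rightarrow> 'b::topological_space" and h :: "'b \<Rightarrow> real"
  assumes "T \<in> borel_measurable M" "T0 \<in> borel_measurable M"
    and "distr M borel T = distr M borel T0" and "h \<in> borel_measurable borel"
  shows "expectation (\<lambda>x. h (T x)) = expectation (\<lambda>x. h (T0 x))"
  using integral_distr[OF assms(1,4)] integral_distr[OF assms(2,4)] assms(3) by simp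

lemma square_integrable_distr_eq:
  fixes T T0 :: "'a \<Rightarrow> 'b::topological_space"
  assumes T: "T \<in> borel_measurable M" and T0: "T0 \<in> borel_measurable M"
    and distr: "distr M borel T = distr M borel T0" and f: "f \<in> borel_measurable borel"
    and "square_integrable M (\<lambda>x. f (T0 x))"
  shows "square_integrable M (\<lambda>x. f (T x))"
proof -
  have square: "(\<lambda>u. (f u)\<^sup>2) \<in> borel_measurable borel"
    using f by measurable
  have "integrable M (\<lambda>x. (f (T x))\<^sup>2) \<longleftrightarrow> integrable (distr M borel T) (\<lambda>u. (f u)\<^sup>2)"
    using integrable_distr_eq[OF T square] by simp
  also have "\<dots> \<longleftrightarrow> integrable M (\<lambda>x. (f (T0 x))\<^sup>2)"
    using integrable_distr_eq[OF T0 square] distr by simp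
  finally show ?thesis
    using assms measurable_compose[OF T f] unfolding square_integrable_def by simp
qed

lemma cov_distr_eq:
  fixes T T0 :: "'a \<Rightarrow> 'b::topological_space"
  assumes "T \<in> borel_measurable M" "T0 \<in> borel_measurable M"
    and "distr M borel T = distr M borel T0"
    and [measurable]: "f \<in> borel_measurable borel" "g \<in> borel_measurable borel"
  shows "cov M (\<lambda>x. f (T x)) (\<lambda>x. g (T x)) = cov M (\<lambda>x. f (T0 x)) (\<lambda>x. g (T0 x))"
proof -
  note transfer = expectation_distr_eq[OF assms(1-3)]
  define h where "h = (\<lambda>u. (f u - expectation (\<lambda>x. f (T0 x))) * (g u - expectation (\<lambda>x. g (T0 x))))"
  have h: "h \<in> borel_measurable borel"
    unfolding h_def by measurable
  show ?thesis
    using transfer[OF h] unfolding cov_def transfer[OF assms(4)] transfer[OF assms(5)] h_def .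
qed

lemma cov_indep_var:
  assumes "indep_var borel X borel Y" "square_integrable M X" "square_integrable M Y"
  shows "cov M X Y = 0"
  using indep_var_lebesgue_integral[OF assms(1) square_integrable_integrable[OF assms(2)]
      square_integrable_integrable[OF assms(3)]]
  unfolding cov_eq_expectation_mult[OF assms(2,3)] by simp

lemma indep_vars_indep_var_compose:
  assumes "indep_vars (\<lambda>_. borel) T I" "i \<in> I" "j \<in> I" "i \<noteq> j"
    and [measurable]: "f \<in> borel_measurable borel" "g \<in> borel_measurable borel"
  shows "indep_var borel (\<lambda>x. f (T i x)) borel (\<lambda>x. g (T j x))"
proof -
  have "indep_var (PiM {i} (\<lambda>_. borel)) (\<lambda>x. restrict (\<lambda>k. T k x) {i})
                  (PiM {j} (\<lambda>_. borel)) (\<lambda>x. restrict (\<lambda>k. T k x) {j})"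
    using indep_var_restrict[OF assms(1), of "{i}" "{j}"] assms(2-4) by auto
  moreover have "(\<lambda>F. f (F i)) \<in> measurable (PiM {i} (\<lambda>_. borel)) borel"
    and "(\<lambda>F. g (F j)) \<in> measurable (PiM {j} (\<lambda>_. borel)) borel"
    by measurable
  ultimately have "indep_var borel ((\<lambda>F. f (F i)) \<circ> (\<lambda>x. restrict (\<lambda>k. T k x) {i}))
                          borel ((\<lambda>F. g (F j)) \<circ> (\<lambda>x. restrict (\<lambda>k. T k x) {j}))"
    by (rule indep_var_compose)
  then show ?thesis
    by (simp add: comp_def)
qed

lemma expectation_sample_mean:
  assumes "n \<ge> 1" "\<And>i. i < n \<Longrightarrow> integrable M (X i)" "\<And>i. i < n \<Longrightarrow> expectation (X i) = \<mu>"
  shows "expectation (sample_mean n X) = \<mu>"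
  using assms unfolding sample_mean_def by simp

end

locale iid_copies = prob_space +
  fixes T :: "nat \<Rightarrow> 'a \<Rightarrow> 'b::topological_space" and T0 :: "'a \<Rightarrow> 'b" and n :: nat
  assumes copies_measurable: "\<And>i. i < n \<Longrightarrow> T i \<in> borel_measurable M"
    and measurable_T0: "T0 \<in> borel_measurable M"
    and copies_indep: "indep_vars (\<lambda>_. borel) T {..<n}"
    and copies_distr: "\<And>i. i < n \<Longrightarrow> distr M borel (T i) = distr M borel T0"
    and nonempty_sample: "n \<ge> 1"
begin

lemma square_integrable_copy:
  "f \<in> borel_measurable borel \<Longrightarrow> square_integrable M (\<lambda>x. f (T0 x)) \<Longrightarrow> i < n
    \<Longrightarrow> square_integrable M (\<lambda>x. f (T i x))"
  using square_integrable_distr_eq copies_measurable measurable_T0 copies_distr by blast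

lemma square_integrable_sample_mean_copies:
  assumes "f \<in> borel_measurable borel" "square_integrable M (\<lambda>x. f (T0 x))"
  shows "square_integrable M (sample_mean n (\<lambda>i x. f (T i x)))"
  using square_integrable_copy[OF assms] by (rule square_integrable_sample_mean)

lemma expectation_sample_mean_copies:
  assumes "f \<in> borel_measurable borel" "square_integrable M (\<lambda>x. f (T0 x))"
  shows "expectation (sample_mean n (\<lambda>i x. f (T i x))) = expectation (\<lambda>x. f (T0 x))"
  using nonempty_sample square_integrable_integrable[OF square_integrable_copy[OF assms]]
    expectation_distr_eq[OF copies_measurable measurable_T0 copies_distr assms(1)]
  by (rule expectation_sample_mean)

lemma cov_sample_mean_copies:
  assumes f: "f \<in> borel_measurable borel" "square_integrable M (\<lambda>x. f (T0 x))"
    and g: "g \<in> borel_measurable borel" "square_integrable M (\<lambda>x. g (T0 x))"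
  shows "cov M (sample_mean n (\<lambda>i x. f (T i x))) (sample_mean n (\<lambda>i x. g (T i x)))
    = cov M (\<lambda>x. f (T0 x)) (\<lambda>x. g (T0 x)) / real n"
proof (rule cov_sample_mean)
  show "cov M (\<lambda>x. f (T i x)) (\<lambda>x. g (T j x)) = 0" if "i < n" "j < n" "i \<noteq> j" for i j
    using that copies_indep
    by (intro cov_indep_var indep_vars_indep_var_compose square_integrable_copy f g) auto
  show "cov M (\<lambda>x. f (T i x)) (\<lambda>x. g (T i x)) = cov M (\<lambda>x. f (T0 x)) (\<lambda>x. g (T0 x))"
    if "i < n" for i
    using cov_distr_eq[OF copies_measurable[OF that] measurable_T0 copies_distr[OF that] f(1) g(1)] .
qed (use square_integrable_copy[OF f] square_integrable_copy[OF g] in auto)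

end

theorem mainTheorem4:
  fixes M :: "'a measure"
    and A B C :: "'a \<Rightarrow> real"
    and As Bs Cs :: "nat \<Rightarrow> 'a \<Rightarrow> real"
    and n :: nat
  assumes "prob_space M"
    and "A \<in> borel_measurable M" and "B \<in> borel_measurable M" and "C \<in> borel_measurable M"
    and "integrable M (\<lambda>x. (A x)^2)" and "integrable M (\<lambda>x. (B x)^2)"
    and "integrable M (\<lambda>x. (C x)^2)"
    and "prob_space.variance M B > 0"
    and "prob_space.expectation M A \<noteq> 0"
    and "prob_space.expectation M C \<noteq> 0"
    and "n \<ge> 1"
    and "\<And>i. i < n \<Longrightarrow> As i \<in> borel_measurable M"
    and "\<And>i. i < n \<Longrightarrow> Bs i \<in> borel_measurable M"
    and "\<And>i. i < n \<Longrightarrow> Cs i \<in> borel_measurable M"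
    and "prob_space.indep_vars M (\<lambda>_. borel) (\<lambda>i x. (As i x, Bs i x, Cs i x)) {..<n}"
    and "\<And>i. i < n \<Longrightarrow>
           distr M borel (\<lambda>x. (As i x, Bs i x, Cs i x)) = distr M borel (\<lambda>x. (A x, B x, C x))"
  shows "let R = prob_space.expectation M A / prob_space.expectation M C;
             \<alpha>' = (cov M A B - R * cov M B C) / prob_space.variance M B;
             N = (\<lambda>\<alpha> x. sample_mean n As x + \<alpha> * (prob_space.expectation M B - sample_mean n Bs x))
         in Phi M (N \<alpha>') (sample_mean n Cs) - Phi M (sample_mean n As) (sample_mean n Cs)
              = - (1 / (real n * (prob_space.expectation M C)^2))
                  * ((cov M A B - R * cov M B C)^2 / prob_space.variance M B)
            \<and> Phi M (N \<alpha>') (sample_mean n Cs) - Phi M (sample_mean n As) (sample_mean n Cs) \<le> 0"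
proof -
  interpret prob_space M by fact
  define T where "T = (\<lambda>i x. (As i x, Bs i x, Cs i x))"
  interpret iid_copies M T "\<lambda>x. (A x, B x, C x)" n
    by unfold_locales (use assms in \<open>auto simp: T_def intro!: borel_measurable_Pair\<close>)
  have components: "fst \<in> borel_measurable borel" "(\<lambda>u. fst (snd u)) \<in> borel_measurable borel"
    "(\<lambda>u. snd (snd u)) \<in> borel_measurable borel"
    by (intro borel_measurable_continuous_onI continuous_intros)+
  have "square_integrable M A" "square_integrable M B" "square_integrable M C"
    using assms unfolding square_integrable_def by auto
  then have SA: "square_integrable M (sample_mean n As)" "expectation (sample_mean n As) = expectation A"
    and SB: "square_integrable M (sample_mean n Bs)" "expectation (sample_mean n Bs) = expectation B"
      "variance (sample_mean n Bs) = variance B / n"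
    and SC: "square_integrable M (sample_mean n Cs)" "expectation (sample_mean n Cs) = expectation C"
    and cov_AB: "cov M (sample_mean n As) (sample_mean n Bs) = cov M A B / n"
    and cov_CB: "cov M (sample_mean n Cs) (sample_mean n Bs) = cov M B C / n"
    using components[THEN square_integrable_sample_mean_copies]
      components[THEN expectation_sample_mean_copies]
      cov_sample_mean_copies[OF components(1) _ components(2)]
      cov_sample_mean_copies[OF components(2) _ components(2)]
      cov_sample_mean_copies[OF components(3) _ components(2)]
    unfolding variance_eq_cov by (simp_all add: T_def cov_commute[of C B])
  define R where "R = expectation A / expectation C"
  define K where "K = cov M A B - R * cov M B C"
  have cov_residual: "cov M (\<lambda>x. sample_mean n As x - R * sample_mean n Cs x) (sample_mean n Bs) = K / n"
    using cov_add_cmult_left[OF SA(1) SC(1) SB(1), of "- R" 0] cov_AB cov_CB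
    unfolding K_def by (simp add: diff_divide_distrib)
  have difference: "Phi M (\<lambda>x. sample_mean n As x + \<alpha> * (expectation B - sample_mean n Bs x))
        (sample_mean n Cs) - Phi M (sample_mean n As) (sample_mean n Cs)
      = \<alpha> * (\<alpha> * (variance B / n) - 2 * (K / n)) / (expectation C)\<^sup>2" for \<alpha>
    using Phi_control_variate[OF SA(1) SB(1) SC(1), of \<alpha>] unfolding SB(3)
    unfolding SA(2) SB(2) SC(2) R_def[symmetric] cov_residual .
  have "K / variance B * (K / variance B * (variance B / n) - 2 * (K / n)) / (expectation C)\<^sup>2
      = - (1 / (real n * (expectation C)\<^sup>2)) * (K\<^sup>2 / variance B)"
    using assms(8,10,11) by (simp add: field_simps power2_eq_square)
  moreover have "- (1 / (real n * (expectation C)\<^sup>2)) * (K\<^sup>2 / variance B) \<le> 0"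
    using assms(8) by simp
  ultimately show ?thesis
    using difference[of "K / variance B"] unfolding Let_def R_def[symmetric] K_def[symmetric] by simp
qed

end
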